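(* Let $Q$ be an admissible orientation of $\tilde A_n$ and let $I,J$ be two-sided ideals of $\Bbbk Q$. Then the multiplication map $\varphi_{I,J}:I\otimes_{\Bbbk Q}J\to IJ$, $a\otimes b\mapsto ab$, is an isomorphism of $\Bbbk Q$-$\Bbbk Q$-bimodules.
   Context: $\Bbbk$ is an algebraically closed field. An admissible orientation of $\tilde A_n$ is a finite quiver with $n$ vertices whose underlying undirected graph is a cycle, with no oriented cycle and at least one source. $IJ$ denotes the ideal spanned by all products $ab$ with $a\in I$, $b\in J$. *)

theory Defs
  imports "HOL-Computational_Algebra.Polynomial"
begin

definition alg_closed :: "'k::field itself \<Rightarrow> bool" where
  "alg_closed _ \<longleftrightarrow> (\<forall>p::'k poly. degree p > 0 \<longrightarrow> (\<exists>x. poly p x = 0))"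

text \<open>Vertices are 0,...,n-1; arrow i (i < n) joins vertex i and vertex (i+1) mod n.
  The orientation ori i says whether arrow i goes i -> (i+1) mod n (True) or the
  other way (False).\<close>

definition arr_src :: "(nat \<Rightarrow> bool) \<Rightarrow> nat \<Rightarrow> nat \<Rightarrow> nat" where
  "arr_src ori n i = (if ori i then i else Suc i mod n)"

definition arr_tgt :: "(nat \<Rightarrow> bool) \<Rightarrow> nat \<Rightarrow> nat \<Rightarrow> nat" where
  "arr_tgt ori n i = (if ori i then Suc i mod n else i)"

text \<open>A path is a start vertex together with a list of arrows, traversed left to right;
  (v, []) is the trivial path e_v.\<close>

type_synonym qpath = "nat \<times> nat list"

fun valid_path :: "(nat \<Rightarrow> bool) \<Rightarrow> nat \<Rightarrow> qpath \<Rightarrow> bool" where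
  "valid_path ori n (v, as) \<longleftrightarrow>
     v < n \<and> (\<forall>a\<in>set as. a < n) \<and>
     (as \<noteq> [] \<longrightarrow> arr_src ori n (hd as) = v) \<and>
     (\<forall>i. Suc i < length as \<longrightarrow> arr_tgt ori n (as ! i) = arr_src ori n (as ! Suc i))"

fun path_end :: "(nat \<Rightarrow> bool) \<Rightarrow> nat \<Rightarrow> qpath \<Rightarrow> nat" where
  "path_end ori n (v, as) = (if as = [] then v else arr_tgt ori n (last as))"

definition has_oriented_cycle :: "(nat \<Rightarrow> bool) \<Rightarrow> nat \<Rightarrow> bool" where
  "has_oriented_cycle ori n \<longleftrightarrow>
     (\<exists>v as. as \<noteq> [] \<and> valid_path ori n (v, as) \<and> path_end ori n (v, as) = v)"

definition is_source :: "(nat \<Rightarrow> bool) \<Rightarrow> nat \<Rightarrow> nat \<Rightarrow> bool" where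
  "is_source ori n v \<longleftrightarrow> v < n \<and> (\<forall>i<n. arr_tgt ori n i \<noteq> v)"

definition admissible :: "(nat \<Rightarrow> bool) \<Rightarrow> nat \<Rightarrow> bool" where
  "admissible ori n \<longleftrightarrow> \<not> has_oriented_cycle ori n \<and> (\<exists>v. is_source ori n v)"

text \<open>Elements of kQ are k-valued functions on paths vanishing off valid paths
  (kQ is finite dimensional since Q is acyclic; in general one would add finite support).\<close>

definition path_alg :: "(nat \<Rightarrow> bool) \<Rightarrow> nat \<Rightarrow> (qpath \<Rightarrow> 'k::field) set" where
  "path_alg ori n = {f. finite {p. f p \<noteq> 0} \<and> (\<forall>p. \<not> valid_path ori n p \<longrightarrow> f p = 0)}"

definition pmult :: "(nat \<Rightarrow> bool) \<Rightarrow> nat \<Rightarrow> (qpath \<Rightarrow> 'k::field) \<Rightarrow> (qpath \<Rightarrow> 'k) \<Rightarrow> (qpath \<Rightarrow> 'k)" where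
  "pmult ori n f g = (\<lambda>(v, as). if valid_path ori n (v, as) then
      (\<Sum>k\<le>length as. f (v, take k as) * g (path_end ori n (v, take k as), drop k as))
    else 0)"

definition is_ideal :: "(nat \<Rightarrow> bool) \<Rightarrow> nat \<Rightarrow> (qpath \<Rightarrow> 'k::field) set \<Rightarrow> bool" where
  "is_ideal ori n I \<longleftrightarrow>
     I \<subseteq> path_alg ori n \<and> (\<lambda>_. 0) \<in> I \<and>
     (\<forall>a\<in>I. \<forall>b\<in>I. (\<lambda>p. a p + b p) \<in> I) \<and>
     (\<forall>c a. a \<in> I \<longrightarrow> (\<lambda>p. c * a p) \<in> I) \<and>
     (\<forall>r\<in>path_alg ori n. \<forall>a\<in>I. pmult ori n r a \<in> I \<and> pmult ori n a r \<in> I)"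

definition ideal_prod :: "(nat \<Rightarrow> bool) \<Rightarrow> nat \<Rightarrow> (qpath \<Rightarrow> 'k::field) set \<Rightarrow> (qpath \<Rightarrow> 'k) set \<Rightarrow> (qpath \<Rightarrow> 'k) set" where
  "ideal_prod ori n I J =
     {f. \<exists>ps. set ps \<subseteq> I \<times> J \<and> f = (\<lambda>p. \<Sum>q\<leftarrow>ps. pmult ori n (fst q) (snd q) p)}"

section \<open>The tensor product I \<otimes>_kQ J, as free k-vector space on I \<times> J modulo relations\<close>

definition free_mod :: "'e set \<Rightarrow> 'e set \<Rightarrow> ('e \<times> 'e \<Rightarrow> 'k::field) set" where
  "free_mod I J = {x. finite {q. x q \<noteq> 0} \<and> {q. x q \<noteq> 0} \<subseteq> I \<times> J}"

definition delta :: "'e \<times> 'e \<Rightarrow> ('e \<times> 'e \<Rightarrow> 'k::field)" where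
  "delta q = (\<lambda>q'. if q' = q then 1 else 0)"

inductive_set tens_rel :: "(nat \<Rightarrow> bool) \<Rightarrow> nat \<Rightarrow> (qpath \<Rightarrow> 'k::field) set \<Rightarrow> (qpath \<Rightarrow> 'k) set
    \<Rightarrow> ((qpath \<Rightarrow> 'k) \<times> (qpath \<Rightarrow> 'k) \<Rightarrow> 'k) set"
  for ori n I J where
  zero: "(\<lambda>_. 0) \<in> tens_rel ori n I J"
| add: "x \<in> tens_rel ori n I J \<Longrightarrow> y \<in> tens_rel ori n I J \<Longrightarrow> (\<lambda>q. x q + y q) \<in> tens_rel ori n I J"
| smult: "x \<in> tens_rel ori n I J \<Longrightarrow> (\<lambda>q. c * x q) \<in> tens_rel ori n I J"
| add_left: "a \<in> I \<Longrightarrow> a' \<in> I \<Longrightarrow> b \<in> J \<Longrightarrow>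
    (\<lambda>q. delta ((\<lambda>p. a p + a' p), b) q - delta (a, b) q - delta (a', b) q) \<in> tens_rel ori n I J"
| add_right: "a \<in> I \<Longrightarrow> b \<in> J \<Longrightarrow> b' \<in> J \<Longrightarrow>
    (\<lambda>q. delta (a, (\<lambda>p. b p + b' p)) q - delta (a, b) q - delta (a, b') q) \<in> tens_rel ori n I J"
| smult_left: "a \<in> I \<Longrightarrow> b \<in> J \<Longrightarrow>
    (\<lambda>q. delta ((\<lambda>p. c * a p), b) q - c * delta (a, b) q) \<in> tens_rel ori n I J"
| smult_right: "a \<in> I \<Longrightarrow> b \<in> J \<Longrightarrow>
    (\<lambda>q. delta (a, (\<lambda>p. c * b p)) q - c * delta (a, b) q) \<in> tens_rel ori n I J"
| balanced: "a \<in> I \<Longrightarrow> b \<in> J \<Longrightarrow> r \<in> path_alg ori n \<Longrightarrow>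
    (\<lambda>q. delta (pmult ori n a r, b) q - delta (a, pmult ori n r b) q) \<in> tens_rel ori n I J"

definition tens_mult :: "(nat \<Rightarrow> bool) \<Rightarrow> nat \<Rightarrow> ((qpath \<Rightarrow> 'k::field) \<times> (qpath \<Rightarrow> 'k) \<Rightarrow> 'k) \<Rightarrow> (qpath \<Rightarrow> 'k)" where
  "tens_mult ori n x = (\<lambda>p. \<Sum>q\<in>{q. x q \<noteq> 0}. x q * pmult ori n (fst q) (snd q) p)"

end

theory Submission
  imports Defs "HOL-Library.List_Lexorder" "HOL-Library.Product_Lexorder"
begin

text \<open>Right ideals of a path algebra are projective, which makes \<open>I \<otimes> J \<rightarrow> IJ\<close> injective.
  Concretely, order paths by length, then lexicographically. Among the leading paths of
  elements of \<open>I\<close> take those none of whose proper prefixes is again a leading path; for each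
  such \<open>g\<close> fix a monic element \<open>x\<^sub>g \<in> I\<close> with leading path \<open>g\<close> supported on paths ending at the
  end vertex \<open>t(g)\<close> of \<open>g\<close>. Cancelling leading paths rewrites every tensor, modulo the defining
  relations, as \<open>\<Sum> x\<^sub>g \<otimes> y\<^sub>g\<close> with \<open>y\<^sub>g \<in> e\<^bsub>t(g)\<^esub> J\<close>. If \<open>\<Sum> x\<^sub>g y\<^sub>g = 0\<close> then all \<open>y\<^sub>g\<close> vanish,
  because the chosen paths are prefix-free, so the largest path \<open>g\<close> followed by the leading
  path of \<open>y\<^sub>g\<close> occurs in only one summand.\<close>

lemma path_end_append:
  "path_end ori n (v, as @ bs) = path_end ori n (path_end ori n (v, as), bs)"
  by (cases "bs = []") auto

lemma valid_path_take: "valid_path ori n (v, as) \<Longrightarrow> valid_path ori n (v, take k as)"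
  by (auto dest: in_set_takeD simp: hd_take)

lemma path_end_less: "valid_path ori n p \<Longrightarrow> path_end ori n p < n"
proof (cases p)
  case (Pair v as)
  assume valid: "valid_path ori n p"
  show ?thesis
  proof (cases "as = []")
    case True
    then show ?thesis using valid Pair by simp
  next
    case False
    then have "last as < n" "n > 0" using valid Pair by auto
    then show ?thesis using False Pair by (auto simp: arr_tgt_def)
  qed
qed

lemma valid_path_drop:
  assumes valid: "valid_path ori n (v, as)"
  shows "valid_path ori n (path_end ori n (v, take k as), drop k as)"
proof -
  have hd_src: "arr_src ori n (hd (drop k as)) = path_end ori n (v, take k as)"
    if "drop k as \<noteq> []"
  proof -
    have k: "k < length as" using that by simp
    then have hd: "hd (drop k as) = as ! k" by (simp add: hd_drop_conv_nth)
    show ?thesis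
    proof (cases k)
      case 0
      then show ?thesis using valid k by (cases as) auto
    next
      case (Suc j)
      have "take k as \<noteq> []" using Suc k by (cases as) auto
      moreover have "last (take k as) = as ! j"
        using Suc k \<open>take k as \<noteq> []\<close> by (simp add: last_conv_nth min_def)
      moreover have "arr_tgt ori n (as ! j) = arr_src ori n (as ! Suc j)"
        using valid Suc k by auto
      ultimately show ?thesis using hd Suc by simp
    qed
  qed
  show ?thesis
    using path_end_less[OF valid_path_take[OF valid]] hd_src valid by (auto dest: in_set_dropD)
qed

lemma valid_path_append:
  assumes valid1: "valid_path ori n (v, as)" and valid2: "valid_path ori n (w, bs)"
    and ends: "path_end ori n (v, as) = w"
  shows "valid_path ori n (v, as @ bs)"
proof -
  have hd_src: "as @ bs \<noteq> [] \<longrightarrow> arr_src ori n (hd (as @ bs)) = v"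
    using valid1 valid2 ends by (cases "as = []") auto
  have chain: "arr_tgt ori n ((as @ bs) ! i) = arr_src ori n ((as @ bs) ! Suc i)"
    if "Suc i < length (as @ bs)" for i
  proof -
    consider "Suc i < length as" | "Suc i = length as" | "Suc i > length as" by linarith
    then show ?thesis
    proof cases
      case 1
      then show ?thesis using valid1 by (auto simp: nth_append)
    next
      case 2
      then have "as \<noteq> []" by auto
      then have "last as = as ! i" using 2 by (metis diff_Suc_1 last_conv_nth)
      moreover have "bs \<noteq> []" using that 2 by auto
      ultimately show ?thesis using 2 valid2 ends by (auto simp: nth_append hd_conv_nth)
    next
      case 3
      then have "Suc (i - length as) < length bs" "Suc i - length as = Suc (i - length as)"
        using that by auto
      then show ?thesis using 3 valid2 by (auto simp: nth_append)
    qed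
  qed
  show ?thesis using valid1 valid2 hd_src chain by auto
qed

declare valid_path.simps[simp del] path_end.simps[simp del]

lemma pmult_apply:
  "pmult ori n f g (v, as) = (if valid_path ori n (v, as) then
      (\<Sum>k\<le>length as. f (v, take k as) * g (path_end ori n (v, take k as), drop k as)) else 0)"
  by (simp add: pmult_def)

lemma sum_triangle_reindex:
  fixes F :: "nat \<Rightarrow> nat \<Rightarrow> 'a::comm_monoid_add"
  shows "(\<Sum>k\<le>L. \<Sum>j\<le>k. F j k) = (\<Sum>j\<le>L. \<Sum>i\<le>L - j. F j (j + i))"
proof (induction L)
  case 0
  then show ?case by simp
next
  case (Suc L)
  have "(\<Sum>j\<le>Suc L. \<Sum>i\<le>Suc L - j. F j (j + i))
      = (\<Sum>j\<le>L. (\<Sum>i\<le>L - j. F j (j + i)) + F j (Suc L)) + F (Suc L) (Suc L)"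
  proof -
    have "(\<Sum>i\<le>Suc L - j. F j (j + i)) = (\<Sum>i\<le>L - j. F j (j + i)) + F j (Suc L)"
      if "j \<le> L" for j
      using that by (simp add: Suc_diff_le)
    then show ?thesis by simp
  qed
  then show ?case using Suc by (simp add: sum.distrib add.assoc)
qed

lemma pmult_assoc: "pmult ori n (pmult ori n f g) h = pmult ori n f (pmult ori n g h)"
proof (rule ext, clarify)
  fix v as
  show "pmult ori n (pmult ori n f g) h (v, as) = pmult ori n f (pmult ori n g h) (v, as)"
  proof (cases "valid_path ori n (v, as)")
    case False
    then show ?thesis by (simp add: pmult_apply)
  next
    case valid: True
    define L where "L = length as"
    define e where "e k = path_end ori n (v, take k as)" for k
    define F where "F j k = f (v, take j as) * g (e j, drop j (take k as)) * h (e k, drop k as)"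
      for j k
    have "pmult ori n (pmult ori n f g) h (v, as)
        = (\<Sum>k\<le>L. pmult ori n f g (v, take k as) * h (e k, drop k as))"
      using valid by (simp add: pmult_apply L_def e_def)
    also have "\<dots> = (\<Sum>k\<le>L. \<Sum>j\<le>k. F j k)"
    proof (rule sum.cong[OF refl])
      fix k assume "k \<in> {..L}"
      then have "pmult ori n f g (v, take k as) = (\<Sum>j\<le>k. f (v, take j as) * g (e j, drop j (take k as)))"
        using valid_path_take[OF valid, of k]
        by (simp add: pmult_apply L_def e_def take_take min_def)
      then show "pmult ori n f g (v, take k as) * h (e k, drop k as) = (\<Sum>j\<le>k. F j k)"
        by (simp add: F_def sum_distrib_right)
    qed
    also have "\<dots> = (\<Sum>j\<le>L. \<Sum>i\<le>L - j. F j (j + i))"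
      by (rule sum_triangle_reindex)
    also have "\<dots> = (\<Sum>j\<le>L. f (v, take j as) * pmult ori n g h (e j, drop j as))"
    proof (rule sum.cong[OF refl])
      fix j
      have "path_end ori n (e j, take i (drop j as)) = e (j + i)" for i
        by (simp add: e_def take_add path_end_append)
      then have "pmult ori n g h (e j, drop j as)
          = (\<Sum>i\<le>L - j. g (e j, drop j (take (j + i) as)) * h (e (j + i), drop (j + i) as))"
        using valid_path_drop[OF valid, of j]
        by (simp add: pmult_apply L_def e_def take_drop add.commute)
      then show "(\<Sum>i\<le>L - j. F j (j + i)) = f (v, take j as) * pmult ori n g h (e j, drop j as)"
        by (simp add: F_def sum_distrib_left mult.assoc)
    qed
    also have "\<dots> = pmult ori n f (pmult ori n g h) (v, as)"
      using valid by (simp add: pmult_apply L_def e_def)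
    finally show ?thesis .
  qed
qed

lemma pmult_add_left: "pmult ori n (\<lambda>p. a p + a' p) b = (\<lambda>p. pmult ori n a b p + pmult ori n a' b p)"
  by (rule ext, clarify) (simp add: pmult_apply sum.distrib distrib_right)

lemma pmult_add_right: "pmult ori n a (\<lambda>p. b p + b' p) = (\<lambda>p. pmult ori n a b p + pmult ori n a b' p)"
  by (rule ext, clarify) (simp add: pmult_apply sum.distrib distrib_left)

lemma pmult_smult_left: "pmult ori n (\<lambda>p. c * a p) b = (\<lambda>p. c * pmult ori n a b p)"
  by (rule ext, clarify) (simp add: pmult_apply sum_distrib_left mult_ac)

lemma pmult_smult_right: "pmult ori n a (\<lambda>p. c * b p) = (\<lambda>p. c * pmult ori n a b p)"
  by (rule ext, clarify) (simp add: pmult_apply sum_distrib_left mult_ac)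

lemma pmult_zero_right: "pmult ori n a (\<lambda>_. 0) = (\<lambda>_. 0)"
  by (rule ext, clarify) (simp add: pmult_apply)

lemma path_alg_valid: "a \<in> path_alg ori n \<Longrightarrow> a p \<noteq> 0 \<Longrightarrow> valid_path ori n p"
  unfolding path_alg_def by blast

lemma path_alg_finite_support: "a \<in> path_alg ori n \<Longrightarrow> finite {p. a p \<noteq> 0}"
  by (auto simp: path_alg_def)

lemma ideal_subset_path_alg: "is_ideal ori n I \<Longrightarrow> a \<in> I \<Longrightarrow> a \<in> path_alg ori n"
  by (auto simp: is_ideal_def)

lemma ideal_zero: "is_ideal ori n I \<Longrightarrow> (\<lambda>_. 0) \<in> I"
  unfolding is_ideal_def by blast

lemma ideal_add: "is_ideal ori n I \<Longrightarrow> a \<in> I \<Longrightarrow> b \<in> I \<Longrightarrow> (\<lambda>p. a p + b p) \<in> I"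
  unfolding is_ideal_def by blast

lemma ideal_smult: "is_ideal ori n I \<Longrightarrow> a \<in> I \<Longrightarrow> (\<lambda>p. c * a p) \<in> I"
  unfolding is_ideal_def by blast

lemma ideal_mult_left: "is_ideal ori n I \<Longrightarrow> r \<in> path_alg ori n \<Longrightarrow> a \<in> I \<Longrightarrow> pmult ori n r a \<in> I"
  unfolding is_ideal_def by blast

lemma ideal_mult_right: "is_ideal ori n I \<Longrightarrow> r \<in> path_alg ori n \<Longrightarrow> a \<in> I \<Longrightarrow> pmult ori n a r \<in> I"
  unfolding is_ideal_def by blast

definition basis_path :: "qpath \<Rightarrow> qpath \<Rightarrow> 'k::field" where
  "basis_path q = (\<lambda>p. if p = q then 1 else 0)"

lemma basis_path_in_path_alg: "valid_path ori n q \<Longrightarrow> basis_path q \<in> path_alg ori n"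
  by (auto simp: path_alg_def basis_path_def)

definition starts_at :: "nat \<Rightarrow> (qpath \<Rightarrow> 'k::field) \<Rightarrow> bool" where
  "starts_at w a \<longleftrightarrow> (\<forall>p. a p \<noteq> 0 \<longrightarrow> fst p = w)"

definition ends_at :: "(nat \<Rightarrow> bool) \<Rightarrow> nat \<Rightarrow> nat \<Rightarrow> (qpath \<Rightarrow> 'k::field) \<Rightarrow> bool" where
  "ends_at ori n w a \<longleftrightarrow> (\<forall>p. a p \<noteq> 0 \<longrightarrow> path_end ori n p = w)"

lemma starts_at_zero: "starts_at w (\<lambda>_. 0)"
  by (simp add: starts_at_def)

lemma starts_at_add: "starts_at w a \<Longrightarrow> starts_at w b \<Longrightarrow> starts_at w (\<lambda>p. a p + b p)"
  unfolding starts_at_def by (metis add.right_neutral)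

lemma starts_at_smult: "starts_at w a \<Longrightarrow> starts_at w (\<lambda>p. c * a p)"
  unfolding starts_at_def by (metis mult_zero_right)

lemma starts_at_basis_path_mult: "starts_at (fst q) (pmult ori n (basis_path q) b)"
  unfolding starts_at_def
proof (intro allI impI)
  fix p assume nz: "pmult ori n (basis_path q) b p \<noteq> 0"
  obtain v cs where p: "p = (v, cs)" by (cases p)
  then have "(\<Sum>k\<le>length cs. basis_path q (v, take k cs) * b (path_end ori n (v, take k cs), drop k cs)) \<noteq> 0"
    using nz by (auto simp: pmult_apply split: if_splits)
  then obtain k where "basis_path q (v, take k cs) * b (path_end ori n (v, take k cs), drop k cs) \<noteq> 0"
    using sum.not_neutral_contains_not_neutral by blast
  then have "(v, take k cs) = q" by (auto simp: basis_path_def split: if_splits)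
  then show "fst p = fst q" using p by auto
qed

lemma pmult_basis_vertex_right:
  assumes "a \<in> path_alg ori n"
  shows "pmult ori n a (basis_path (w, [])) = (\<lambda>p. if path_end ori n p = w then a p else 0)"
proof (rule ext, clarify)
  fix v as
  show "pmult ori n a (basis_path (w, [])) (v, as) = (if path_end ori n (v, as) = w then a (v, as) else 0)"
  proof (cases "valid_path ori n (v, as)")
    case False
    then show ?thesis using path_alg_valid[OF assms] by (force simp: pmult_apply)
  next
    case True
    have "pmult ori n a (basis_path (w, [])) (v, as)
        = (\<Sum>k\<le>length as. a (v, take k as) * basis_path (w, []) (path_end ori n (v, take k as), drop k as))"
      using True by (simp add: pmult_apply)
    also have "\<dots> = (\<Sum>k\<le>length as. if k = length as then (if path_end ori n (v, as) = w then a (v, as) else 0) else 0)"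
      by (rule sum.cong) (auto simp: basis_path_def)
    finally show ?thesis by (simp add: sum.delta)
  qed
qed

section \<open>Leading paths\<close>

definition path_key :: "qpath \<Rightarrow> nat \<times> nat list \<times> nat" where
  "path_key p = (length (snd p), snd p, fst p)"

lemma path_key_inj: "path_key p = path_key q \<Longrightarrow> p = q"
  by (cases p; cases q) (simp add: path_key_def)

lemma finite_paths_key_le: "finite {p. valid_path ori n p \<and> path_key p \<le> K}"
proof (rule finite_subset)
  show "{p. valid_path ori n p \<and> path_key p \<le> K}
      \<subseteq> {..<n} \<times> {as. set as \<subseteq> {..<n} \<and> length as \<le> fst K}"
    by (auto simp: valid_path.simps path_key_def less_eq_prod_def)
  show "finite ({..<n} \<times> {as. set as \<subseteq> {..<n} \<and> length as \<le> fst K})"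
    by (intro finite_cartesian_product finite_lists_length_le) auto
qed

lemma path_key_append_mono:
  assumes valid: "valid_path ori n (v, as)" "valid_path ori n (v0, as0)"
    and ends: "path_end ori n (v, as) = w" "path_end ori n (v0, as0) = w"
    and le: "path_key (v, as) \<le> path_key (v0, as0)" "path_key (w, bs) \<le> path_key (w, bs0)"
  shows "path_key (v, as @ bs) \<le> path_key (v0, as0 @ bs0) \<and>
    (path_key (v, as @ bs) = path_key (v0, as0 @ bs0) \<longrightarrow> v = v0 \<and> as = as0 \<and> bs = bs0)"
proof -
  have len: "length as \<le> length as0" "length bs \<le> length bs0"
    using le by (auto simp: path_key_def less_eq_prod_def)
  show ?thesis
  proof (cases "length as + length bs < length as0 + length bs0")
    case True
    then show ?thesis by (auto simp: path_key_def less_eq_prod_def)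
  next
    case False
    then have same_len: "length as = length as0" "length bs = length bs0" using len by auto
    show ?thesis
    proof (cases "as = as0")
      case False
      then have "as < as0" using le same_len by (auto simp: path_key_def less_eq_prod_def)
      then have "as @ bs < as0 @ bs0" using same_len by (simp add: list_less_def lexord_sufI)
      then show ?thesis using same_len by (auto simp: path_key_def less_eq_prod_def)
    next
      case True
      have "v = v0"
        using valid ends True by (cases "as = []") (auto simp: path_end.simps valid_path.simps)
      moreover have "as @ bs < as0 @ bs0" if "bs \<noteq> bs0"
      proof -
        have "bs < bs0" using le same_len that by (auto simp: path_key_def less_eq_prod_def)
        then show ?thesis using True by (simp add: list_less_def lexord_append_leftI)
      qed
      ultimately show ?thesis using True same_len by (auto simp: path_key_def less_eq_prod_def)
    qed
  qed
qed

lemma pmult_lead_path: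
  assumes x: "x \<in> path_alg ori n" and ends: "ends_at ori n w x" and starts: "starts_at w y"
    and valid: "valid_path ori n (v0, as0)" "valid_path ori n (w, bs0)"
    and end0: "path_end ori n (v0, as0) = w"
    and x_le: "\<forall>p. x p \<noteq> 0 \<longrightarrow> path_key p \<le> path_key (v0, as0)"
    and y_le: "\<forall>p. y p \<noteq> 0 \<longrightarrow> path_key p \<le> path_key (w, bs0)"
  shows "(\<forall>p. pmult ori n x y p \<noteq> 0 \<longrightarrow> path_key p \<le> path_key (v0, as0 @ bs0))
    \<and> pmult ori n x y (v0, as0 @ bs0) = x (v0, as0) * y (w, bs0)"
proof -
  have term_le: "path_key (v, cs) \<le> path_key (v0, as0 @ bs0) \<and>
      (path_key (v, cs) = path_key (v0, as0 @ bs0) \<longrightarrow> take k cs = as0)"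
    if nz: "x (v, take k cs) * y (path_end ori n (v, take k cs), drop k cs) \<noteq> 0" for v cs k
  proof -
    have x_nz: "x (v, take k cs) \<noteq> 0" and y_nz: "y (path_end ori n (v, take k cs), drop k cs) \<noteq> 0"
      using nz by auto
    have end_w: "path_end ori n (v, take k cs) = w" using ends x_nz by (auto simp: ends_at_def)
    have "path_key (v, take k cs) \<le> path_key (v0, as0)" "path_key (w, drop k cs) \<le> path_key (w, bs0)"
      using x_le x_nz y_le y_nz end_w by auto
    from path_key_append_mono[OF path_alg_valid[OF x x_nz] valid(1) end_w end0 this]
    show ?thesis by simp
  qed
  have "path_key p \<le> path_key (v0, as0 @ bs0)" if "pmult ori n x y p \<noteq> 0" for p
  proof (cases p)
    case (Pair v cs)
    then have "(\<Sum>k\<le>length cs. x (v, take k cs) * y (path_end ori n (v, take k cs), drop k cs)) \<noteq> 0"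
      using that by (auto simp: pmult_apply split: if_splits)
    then obtain k where "x (v, take k cs) * y (path_end ori n (v, take k cs), drop k cs) \<noteq> 0"
      using sum.not_neutral_contains_not_neutral by blast
    then show ?thesis using term_le Pair by blast
  qed
  moreover have "pmult ori n x y (v0, as0 @ bs0) = x (v0, as0) * y (w, bs0)"
  proof -
    have "pmult ori n x y (v0, as0 @ bs0) = (\<Sum>k\<le>length (as0 @ bs0).
        x (v0, take k (as0 @ bs0)) * y (path_end ori n (v0, take k (as0 @ bs0)), drop k (as0 @ bs0)))"
      using valid_path_append[OF valid end0] by (simp add: pmult_apply)
    also have "\<dots> = (\<Sum>k\<le>length (as0 @ bs0). if k = length as0 then x (v0, as0) * y (w, bs0) else 0)"
    proof (rule sum.cong[OF refl])
      fix k assume k: "k \<in> {..length (as0 @ bs0)}"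
      show "x (v0, take k (as0 @ bs0)) * y (path_end ori n (v0, take k (as0 @ bs0)), drop k (as0 @ bs0))
          = (if k = length as0 then x (v0, as0) * y (w, bs0) else 0)"
      proof (cases "k = length as0")
        case True
        then show ?thesis using end0 by simp
      next
        case False
        then have "take k (as0 @ bs0) \<noteq> as0" using k by (auto dest: arg_cong[of _ _ length])
        then show ?thesis using False term_le[of v0 k "as0 @ bs0"] by auto
      qed
    qed
    finally show ?thesis by (simp add: sum.delta)
  qed
  ultimately show ?thesis by blast
qed

definition lead_path :: "(qpath \<Rightarrow> 'k::field) \<Rightarrow> qpath" where
  "lead_path a = (SOME p. a p \<noteq> 0 \<and> (\<forall>p'. a p' \<noteq> 0 \<longrightarrow> path_key p' \<le> path_key p))"

lemma lead_path_max:
  assumes "finite {p. a p \<noteq> 0}" "a p0 \<noteq> 0"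
  shows "a (lead_path a) \<noteq> 0 \<and> (\<forall>p. a p \<noteq> 0 \<longrightarrow> path_key p \<le> path_key (lead_path a))"
proof -
  let ?S = "{p. a p \<noteq> 0}"
  have fin: "finite (path_key ` ?S)" using assms(1) by simp
  have "path_key ` ?S \<noteq> {}" using assms(2) by blast
  from Max_in[OF fin this] obtain p where p: "Max (path_key ` ?S) = path_key p" "p \<in> ?S"
    by (rule imageE)
  have "\<forall>p'. a p' \<noteq> 0 \<longrightarrow> path_key p' \<le> path_key p"
    unfolding p(1)[symmetric] using Max_ge[OF fin] by simp
  then have "\<exists>p. a p \<noteq> 0 \<and> (\<forall>p'. a p' \<noteq> 0 \<longrightarrow> path_key p' \<le> path_key p)"
    using p(2) by blast
  then show ?thesis unfolding lead_path_def by (rule someI_ex)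
qed

definition lead_paths :: "(qpath \<Rightarrow> 'k::field) set \<Rightarrow> qpath set" where
  "lead_paths I = {lead_path a | a. a \<in> I \<and> (\<exists>p. a p \<noteq> 0)}"

definition minimal_lead_paths :: "(qpath \<Rightarrow> 'k::field) set \<Rightarrow> qpath set" where
  "minimal_lead_paths I =
     {g \<in> lead_paths I. \<forall>m < length (snd g). (fst g, take m (snd g)) \<notin> lead_paths I}"

text \<open>Such an element exists: multiply any element of \<open>I\<close> with leading path \<open>g\<close> on the right by
  the trivial path at the end of \<open>g\<close> and normalise.\<close>

definition lead_elem :: "(nat \<Rightarrow> bool) \<Rightarrow> nat \<Rightarrow> (qpath \<Rightarrow> 'k::field) set \<Rightarrow> qpath \<Rightarrow> (qpath \<Rightarrow> 'k)" where
  "lead_elem ori n I g = (SOME a. a \<in> I \<and> a g = 1 \<and> (\<forall>p. a p \<noteq> 0 \<longrightarrow> path_key p \<le> path_key g)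
     \<and> ends_at ori n (path_end ori n g) a)"

lemma lead_elem_props:
  assumes I: "is_ideal ori n I" and g: "g \<in> lead_paths I"
  shows "lead_elem ori n I g \<in> I \<and> lead_elem ori n I g g = 1
     \<and> (\<forall>p. lead_elem ori n I g p \<noteq> 0 \<longrightarrow> path_key p \<le> path_key g)
     \<and> ends_at ori n (path_end ori n g) (lead_elem ori n I g) \<and> valid_path ori n g"
proof -
  obtain a p0 where a: "a \<in> I" "a p0 \<noteq> 0" "g = lead_path a" using g by (auto simp: lead_paths_def)
  have a_alg: "a \<in> path_alg ori n" using ideal_subset_path_alg[OF I a(1)] .
  have lead: "a g \<noteq> 0" "\<forall>p. a p \<noteq> 0 \<longrightarrow> path_key p \<le> path_key g"
    using lead_path_max[OF path_alg_finite_support[OF a_alg] a(2)] a(3) by auto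
  have valid: "valid_path ori n g" using path_alg_valid[OF a_alg lead(1)] .
  define w where "w = path_end ori n g"
  have "valid_path ori n (w, [])" using path_end_less[OF valid] by (simp add: w_def valid_path.simps)
  then have e_alg: "basis_path (w, []) \<in> path_alg ori n" by (rule basis_path_in_path_alg)
  define a' where "a' = (\<lambda>p. (1 / a g) * pmult ori n a (basis_path (w, [])) p)"
  have a': "a' = (\<lambda>p. if path_end ori n p = w then a p / a g else 0)"
    using pmult_basis_vertex_right[OF a_alg] by (simp add: a'_def fun_eq_iff)
  have "a' \<in> I" unfolding a'_def by (intro ideal_smult[OF I] ideal_mult_right[OF I e_alg a(1)])
  moreover have "a' g = 1" "\<forall>p. a' p \<noteq> 0 \<longrightarrow> path_key p \<le> path_key g" "ends_at ori n w a'"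
    using lead by (auto simp: a' w_def ends_at_def)
  ultimately have "\<exists>a. a \<in> I \<and> a g = 1 \<and> (\<forall>p. a p \<noteq> 0 \<longrightarrow> path_key p \<le> path_key g)
      \<and> ends_at ori n (path_end ori n g) a"
    unfolding w_def by blast
  then have "lead_elem ori n I g \<in> I \<and> lead_elem ori n I g g = 1
     \<and> (\<forall>p. lead_elem ori n I g p \<noteq> 0 \<longrightarrow> path_key p \<le> path_key g)
     \<and> ends_at ori n (path_end ori n g) (lead_elem ori n I g)"
    unfolding lead_elem_def by (rule someI_ex)
  then show ?thesis using valid by blast
qed

lemma lead_elem_in_ideal: "is_ideal ori n I \<Longrightarrow> g \<in> minimal_lead_paths I \<Longrightarrow> lead_elem ori n I g \<in> I"
  using lead_elem_props[of ori n I g] by (auto simp: minimal_lead_paths_def)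

lemma lead_elem_mult_lead_path:
  assumes I: "is_ideal ori n I" and g: "g \<in> lead_paths I" and y: "y \<in> path_alg ori n"
    and starts: "starts_at (path_end ori n g) y" and y_nz: "y t \<noteq> 0"
    and y_le: "\<forall>p. y p \<noteq> 0 \<longrightarrow> path_key p \<le> path_key t"
  shows "(\<forall>p. pmult ori n (lead_elem ori n I g) y p \<noteq> 0 \<longrightarrow> path_key p \<le> path_key (fst g, snd g @ snd t))
    \<and> pmult ori n (lead_elem ori n I g) y (fst g, snd g @ snd t) = y t"
proof -
  note x = lead_elem_props[OF I g]
  have t: "t = (path_end ori n g, snd t)" using starts y_nz by (cases t) (auto simp: starts_at_def)
  have x_alg: "lead_elem ori n I g \<in> path_alg ori n" using ideal_subset_path_alg[OF I] x by blast
  have valid: "valid_path ori n (fst g, snd g)" "valid_path ori n (path_end ori n g, snd t)"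
    using x path_alg_valid[OF y y_nz] t by simp_all
  have "path_end ori n (fst g, snd g) = path_end ori n g"
    "\<forall>p. lead_elem ori n I g p \<noteq> 0 \<longrightarrow> path_key p \<le> path_key (fst g, snd g)"
    "\<forall>p. y p \<noteq> 0 \<longrightarrow> path_key p \<le> path_key (path_end ori n g, snd t)"
    using x y_le t by simp_all
  from pmult_lead_path[OF x_alg _ starts valid this] x t show ?thesis by simp
qed

lemma minimal_lead_paths_prefix_free:
  assumes g: "g \<in> minimal_lead_paths I" and g': "g' \<in> minimal_lead_paths I"
    and start: "fst g = fst g'" and app: "snd g @ bs = snd g' @ bs'"
  shows "g = g'"
proof -
  have not_shorter: "False"
    if "length (snd h) < length (snd h')" "h \<in> minimal_lead_paths I" "h' \<in> minimal_lead_paths I"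
      "fst h = fst h'" "snd h @ cs = snd h' @ cs'" for h h' cs cs'
  proof -
    have "take (length (snd h)) (snd h @ cs) = take (length (snd h)) (snd h' @ cs')" using that(5) by simp
    then have "(fst h', take (length (snd h)) (snd h')) = h" using that(1,4) by (cases h) simp
    then show False using that(1-3) by (auto simp: minimal_lead_paths_def)
  qed
  consider "length (snd g) < length (snd g')" | "length (snd g') < length (snd g)"
    | "length (snd g) = length (snd g')" by linarith
  then show ?thesis
  proof cases
    case 3
    then have "snd g = snd g'" using app by (simp add: append_eq_append_conv)
    then show ?thesis using start by (simp add: prod_eq_iff)
  next
    case 1
    then show ?thesis using not_shorter g g' start app by blast
  next
    case 2
    then show ?thesis using not_shorter[OF 2 g' g] start app by (metis)
  qed
qed

lemma lead_path_minimal_prefix: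
  assumes "p \<in> lead_paths I"
  obtains m where "m \<le> length (snd p)" "(fst p, take m (snd p)) \<in> minimal_lead_paths I"
proof -
  define P where "P m \<longleftrightarrow> (fst p, take m (snd p)) \<in> lead_paths I" for m
  have ex: "P (length (snd p))" using assms by (simp add: P_def)
  define m where "m = (LEAST m. P m)"
  have "P m" "m \<le> length (snd p)"
    unfolding m_def by (rule LeastI[of P, OF ex], rule Least_le[of P, OF ex])
  moreover have "\<not> P m'" if "m' < m" for m'
    using not_less_Least[OF that[unfolded m_def]] .
  ultimately have "(fst p, take m (snd p)) \<in> minimal_lead_paths I"
    by (simp add: minimal_lead_paths_def P_def min_absorb1)
  then show ?thesis using that \<open>m \<le> length (snd p)\<close> by blast
qed

text \<open>The right ideal \<open>I\<close> is the direct sum of the cyclic modules generated by the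
  \<open>lead_elem ori n I g\<close>: in a vanishing combination, the largest of the paths \<open>g\<close> followed by the
  leading path of its coefficient would occur in exactly one summand, by prefix-freeness.\<close>

lemma lead_elem_combination_eq_zero:
  assumes I: "is_ideal ori n I" and S: "finite S" "S \<subseteq> minimal_lead_paths I"
    and Y: "\<forall>g\<in>S. Y g \<in> path_alg ori n \<and> starts_at (path_end ori n g) (Y g)"
    and zero: "(\<lambda>p. \<Sum>g\<in>S. pmult ori n (lead_elem ori n I g) (Y g) p) = (\<lambda>_. 0)"
  shows "\<forall>g\<in>S. Y g = (\<lambda>_. 0)"
proof (rule ccontr)
  define S' where "S' = {g\<in>S. \<exists>p. Y g p \<noteq> 0}"
  define P where "P g = (fst g, snd g @ snd (lead_path (Y g)))" for g
  define K where "K = (\<lambda>g. path_key (P g)) ` S'"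
  assume "\<not> ?thesis"
  then have "K \<noteq> {}" by (auto simp: S'_def K_def)
  moreover have fin: "finite K" using S by (simp add: S'_def K_def)
  ultimately have "Max K \<in> K" by (rule Max_in[rotated])
  then obtain h where h: "Max K = path_key (P h)" "h \<in> S'"
    unfolding K_def by blast
  have h_max: "path_key (P g) \<le> path_key (P h)" if "g \<in> S'" for g
    unfolding h(1)[symmetric] using Max_ge[OF fin] that by (simp add: K_def)
  have lead: "(\<forall>p. pmult ori n (lead_elem ori n I g) (Y g) p \<noteq> 0 \<longrightarrow> path_key p \<le> path_key (P g))
      \<and> pmult ori n (lead_elem ori n I g) (Y g) (P g) = Y g (lead_path (Y g)) \<and> Y g (lead_path (Y g)) \<noteq> 0"
    if "g \<in> S'" for g
  proof -
    obtain p0 where p0: "Y g p0 \<noteq> 0" and gS: "g \<in> S" using \<open>g \<in> S'\<close> by (auto simp: S'_def)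
    have g: "g \<in> lead_paths I" using gS S by (auto simp: minimal_lead_paths_def)
    have Yg: "Y g \<in> path_alg ori n" "starts_at (path_end ori n g) (Y g)" using Y gS by auto
    note max = lead_path_max[OF path_alg_finite_support[OF Yg(1)] p0]
    show ?thesis
      using lead_elem_mult_lead_path[OF I g Yg conjunct1[OF max] conjunct2[OF max]] max
      by (simp add: P_def)
  qed
  have others: "pmult ori n (lead_elem ori n I g) (Y g) (P h) = 0" if "g \<in> S - {h}" for g
  proof (cases "g \<in> S'")
    case False
    then have "Y g = (\<lambda>_. 0)" using that by (auto simp: S'_def)
    then show ?thesis by (simp add: pmult_zero_right)
  next
    case True
    show ?thesis
    proof (rule ccontr)
      assume "pmult ori n (lead_elem ori n I g) (Y g) (P h) \<noteq> 0"
      then have "path_key (P h) \<le> path_key (P g)" using lead[OF True] by blast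
      then have "P h = P g" using h_max[OF True] by (auto intro: path_key_inj)
      then have "fst h = fst g" "snd h @ snd (lead_path (Y h)) = snd g @ snd (lead_path (Y g))"
        by (simp_all add: P_def)
      moreover have "h \<in> minimal_lead_paths I" "g \<in> minimal_lead_paths I"
        using S(2) h(2) that by (auto simp: S'_def)
      ultimately have "h = g" using minimal_lead_paths_prefix_free by blast
      then show False using that by simp
    qed
  qed
  have "h \<in> S" using h(2) by (simp add: S'_def)
  then have "(\<Sum>g\<in>S. pmult ori n (lead_elem ori n I g) (Y g) (P h))
      = pmult ori n (lead_elem ori n I h) (Y h) (P h) + (\<Sum>g\<in>S - {h}. pmult ori n (lead_elem ori n I g) (Y g) (P h))"
    by (rule sum.remove[OF S(1)])
  also have "(\<Sum>g\<in>S - {h}. pmult ori n (lead_elem ori n I g) (Y g) (P h)) = 0"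
    using others by (intro sum.neutral) blast
  finally show False using lead[OF h(2)] fun_cong[OF zero, of "P h"] by simp
qed

lemma finite_support_add:
  "finite {q. x q \<noteq> 0} \<Longrightarrow> finite {q. y q \<noteq> 0} \<Longrightarrow> finite {q. (x q :: 'k::field) + y q \<noteq> 0}"
  by (rule finite_subset[of _ "{q. x q \<noteq> 0} \<union> {q. y q \<noteq> 0}"]) auto

lemma finite_support_diff:
  "finite {q. x q \<noteq> 0} \<Longrightarrow> finite {q. y q \<noteq> 0} \<Longrightarrow> finite {q. (x q :: 'k::field) - y q \<noteq> 0}"
  by (rule finite_subset[of _ "{q. x q \<noteq> 0} \<union> {q. y q \<noteq> 0}"]) auto

lemma finite_support_smult: "finite {q. x q \<noteq> 0} \<Longrightarrow> finite {q. c * (x q :: 'k::field) \<noteq> 0}"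
  by (rule finite_subset[of _ "{q. x q \<noteq> 0}"]) auto

lemma support_delta: "{q. (delta q0 :: _ \<Rightarrow> 'k::field) q \<noteq> 0} = {q0}"
  by (auto simp: delta_def)

lemma finite_support_delta: "finite {q. (delta q0 :: _ \<Rightarrow> 'k::field) q \<noteq> 0}"
  by (simp add: support_delta)

lemma tens_mult_eq_sum:
  assumes "finite T" "{q. x q \<noteq> 0} \<subseteq> T"
  shows "tens_mult ori n x p = (\<Sum>q\<in>T. x q * pmult ori n (fst q) (snd q) p)"
  unfolding tens_mult_def using assms by (intro sum.mono_neutral_left) auto

lemma tens_mult_add:
  assumes "finite {q. x q \<noteq> 0}" "finite {q. y q \<noteq> 0}"
  shows "tens_mult ori n (\<lambda>q. x q + y q) = (\<lambda>p. tens_mult ori n x p + tens_mult ori n y p)"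
proof
  fix p
  let ?T = "{q. x q \<noteq> 0} \<union> {q. y q \<noteq> 0}"
  have "finite ?T" using assms by simp
  then show "tens_mult ori n (\<lambda>q. x q + y q) p = tens_mult ori n x p + tens_mult ori n y p"
    by (subst (1 2 3) tens_mult_eq_sum[where T = ?T]) (auto simp: distrib_right sum.distrib)
qed

lemma tens_mult_smult:
  assumes "finite {q. x q \<noteq> 0}"
  shows "tens_mult ori n (\<lambda>q. c * x q) = (\<lambda>p. c * tens_mult ori n x p)"
proof
  fix p
  show "tens_mult ori n (\<lambda>q. c * x q) p = c * tens_mult ori n x p"
    using assms by (subst (1 2) tens_mult_eq_sum[where T = "{q. x q \<noteq> 0}"])
      (auto simp: sum_distrib_left mult.assoc)
qed

lemma tens_mult_diff:
  assumes "finite {q. x q \<noteq> 0}" "finite {q. y q \<noteq> 0}"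
  shows "tens_mult ori n (\<lambda>q. x q - y q) = (\<lambda>p. tens_mult ori n x p - tens_mult ori n y p)"
  using tens_mult_add[OF assms(1) finite_support_smult[OF assms(2)], of ori n "-1"]
    tens_mult_smult[OF assms(2), of ori n "-1"]
  by simp

lemma tens_mult_delta: "tens_mult ori n (delta q0 :: _ \<Rightarrow> 'k::field) = pmult ori n (fst q0) (snd q0)"
  by (rule ext) (simp add: tens_mult_def support_delta delta_def)

lemma tens_mult_delta_diff3:
  "tens_mult ori n (\<lambda>q. (delta q1 q :: 'k::field) - delta q2 q - delta q3 q)
     = (\<lambda>p. pmult ori n (fst q1) (snd q1) p - pmult ori n (fst q2) (snd q2) p - pmult ori n (fst q3) (snd q3) p)"
  by (simp only: tens_mult_diff[OF finite_support_diff[OF finite_support_delta finite_support_delta]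
        finite_support_delta] tens_mult_diff[OF finite_support_delta finite_support_delta] tens_mult_delta)

lemma tens_mult_delta_diff_smult:
  "tens_mult ori n (\<lambda>q. (delta q1 q :: 'k::field) - c * delta q2 q)
     = (\<lambda>p. pmult ori n (fst q1) (snd q1) p - c * pmult ori n (fst q2) (snd q2) p)"
  by (simp only: tens_mult_diff[OF finite_support_delta finite_support_smult[OF finite_support_delta]]
        tens_mult_smult[OF finite_support_delta] tens_mult_delta)

lemma tens_mult_delta_diff:
  "tens_mult ori n (\<lambda>q. (delta q1 q :: 'k::field) - delta q2 q)
     = (\<lambda>p. pmult ori n (fst q1) (snd q1) p - pmult ori n (fst q2) (snd q2) p)"
  by (simp only: tens_mult_diff[OF finite_support_delta finite_support_delta] tens_mult_delta)

lemma tens_rel_finite_support_tens_mult_zero: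
  assumes "x \<in> tens_rel ori n I J"
  shows "finite {q. x q \<noteq> 0} \<and> tens_mult ori n x = (\<lambda>_. 0)"
  using assms
proof (induction rule: tens_rel.induct)
  case zero
  then show ?case by (simp add: tens_mult_def)
next
  case (add x y)
  then show ?case by (simp add: tens_mult_add finite_support_add)
next
  case (smult x c)
  then show ?case by (simp add: tens_mult_smult finite_support_smult)
next
  case (add_left a a' b)
  show ?case
    using finite_support_diff[OF finite_support_diff[OF finite_support_delta finite_support_delta]
        finite_support_delta]
    by (simp only: tens_mult_delta_diff3) (simp add: pmult_add_left)
next
  case (add_right a b b')
  show ?case
    using finite_support_diff[OF finite_support_diff[OF finite_support_delta finite_support_delta]
        finite_support_delta]
    by (simp only: tens_mult_delta_diff3) (simp add: pmult_add_right)
next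
  case (smult_left a b c)
  show ?case
    using finite_support_diff[OF finite_support_delta finite_support_smult[OF finite_support_delta]]
    by (simp only: tens_mult_delta_diff_smult) (simp add: pmult_smult_left)
next
  case (smult_right a b c)
  show ?case
    using finite_support_diff[OF finite_support_delta finite_support_smult[OF finite_support_delta]]
    by (simp only: tens_mult_delta_diff_smult) (simp add: pmult_smult_right)
next
  case (balanced a b r)
  show ?case
    using finite_support_diff[OF finite_support_delta finite_support_delta]
    by (simp only: tens_mult_delta_diff) (simp add: pmult_assoc)
qed

lemma tens_mult_free_mod_sum_list:
  assumes "set ps \<subseteq> I \<times> J"
  shows "\<exists>x\<in>free_mod I J. tens_mult ori n x = (\<lambda>p. \<Sum>q\<leftarrow>ps. pmult ori n (fst q) (snd q) p)"
  using assms
proof (induction ps)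
  case Nil
  show ?case by (rule bexI[of _ "\<lambda>_. 0"]) (auto simp: free_mod_def tens_mult_def)
next
  case (Cons q ps)
  then obtain x where x: "x \<in> free_mod I J"
    "tens_mult ori n x = (\<lambda>p. \<Sum>q\<leftarrow>ps. pmult ori n (fst q) (snd q) p)"
    by auto
  have fin: "finite {q. x q \<noteq> 0}" using x by (simp add: free_mod_def)
  have "(\<lambda>r. delta q r + x r) \<in> free_mod I J"
    using x Cons.prems finite_support_add[OF _ fin, of "delta q"]
    by (auto simp: free_mod_def delta_def split: if_splits)
  moreover have "tens_mult ori n (\<lambda>r. delta q r + x r) = (\<lambda>p. \<Sum>q\<leftarrow>q # ps. pmult ori n (fst q) (snd q) p)"
    using tens_mult_add[OF _ fin, of "delta q"] x by (simp add: support_delta tens_mult_delta)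
  ultimately show ?case by blast
qed

lemma tens_mult_image_free_mod:
  assumes I: "is_ideal ori n I"
  shows "tens_mult ori n ` free_mod I J = ideal_prod ori n I J"
proof
  show "ideal_prod ori n I J \<subseteq> tens_mult ori n ` free_mod I J"
  proof
    fix f assume "f \<in> ideal_prod ori n I J"
    then obtain ps where "set ps \<subseteq> I \<times> J" "f = (\<lambda>p. \<Sum>q\<leftarrow>ps. pmult ori n (fst q) (snd q) p)"
      unfolding ideal_prod_def by blast
    with tens_mult_free_mod_sum_list[of ps I J ori n] show "f \<in> tens_mult ori n ` free_mod I J"
      by (metis image_eqI)
  qed
next
  show "tens_mult ori n ` free_mod I J \<subseteq> ideal_prod ori n I J"
  proof
    fix f assume "f \<in> tens_mult ori n ` free_mod I J"
    then obtain x where x: "x \<in> free_mod I J" and f: "f = tens_mult ori n x" by auto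
    have fin: "finite {q. x q \<noteq> 0}" and supp: "{q. x q \<noteq> 0} \<subseteq> I \<times> J"
      using x by (auto simp: free_mod_def)
    obtain xs where xs: "set xs = {q. x q \<noteq> 0}" "distinct xs"
      using finite_distinct_list[OF fin] by blast
    define ps where "ps = map (\<lambda>q. (\<lambda>p. x q * fst q p, snd q)) xs"
    have "set ps \<subseteq> I \<times> J"
      using supp xs ideal_smult[OF I] by (auto simp: ps_def)
    moreover have "f = (\<lambda>p. \<Sum>q\<leftarrow>ps. pmult ori n (fst q) (snd q) p)"
    proof
      fix p
      have "f p = (\<Sum>q\<leftarrow>xs. x q * pmult ori n (fst q) (snd q) p)"
        using f xs by (simp add: tens_mult_def sum_list_distinct_conv_sum_set)
      then show "f p = (\<Sum>q\<leftarrow>ps. pmult ori n (fst q) (snd q) p)"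
        by (simp add: ps_def o_def pmult_smult_left)
    qed
    ultimately show "f \<in> ideal_prod ori n I J" unfolding ideal_prod_def by blast
  qed
qed

lemma tens_rel_sum:
  "finite S \<Longrightarrow> (\<forall>g\<in>S. f g \<in> tens_rel ori n I J) \<Longrightarrow> (\<lambda>q. \<Sum>g\<in>S. f g q) \<in> tens_rel ori n I J"
proof (induction S rule: finite_induct)
  case empty
  then show ?case using tens_rel.zero by simp
next
  case (insert x F)
  then show ?case using tens_rel.add[of "f x" ori n I J "\<lambda>q. \<Sum>g\<in>F. f g q"] by simp
qed

lemma tens_rel_delta_zero_left: "is_ideal ori n I \<Longrightarrow> b \<in> J \<Longrightarrow> delta (\<lambda>_. 0, b) \<in> tens_rel ori n I J"
  using tens_rel.smult_left[OF ideal_zero, where c = 0] by simp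

lemma tens_rel_delta_zero_right: "is_ideal ori n J \<Longrightarrow> a \<in> I \<Longrightarrow> delta (a, \<lambda>_. 0) \<in> tens_rel ori n I J"
  using tens_rel.smult_right[OF _ ideal_zero, where c = 0] by simp

section \<open>Normal forms of tensors\<close>

definition lead_tensor :: "(nat \<Rightarrow> bool) \<Rightarrow> nat \<Rightarrow> (qpath \<Rightarrow> 'k::field) set \<Rightarrow> qpath set
    \<Rightarrow> (qpath \<Rightarrow> qpath \<Rightarrow> 'k) \<Rightarrow> ((qpath \<Rightarrow> 'k) \<times> (qpath \<Rightarrow> 'k) \<Rightarrow> 'k)" where
  "lead_tensor ori n I S Y = (\<lambda>q. \<Sum>g\<in>S. delta (lead_elem ori n I g, Y g) q)"

definition lead_reducible :: "(nat \<Rightarrow> bool) \<Rightarrow> nat \<Rightarrow> (qpath \<Rightarrow> 'k::field) set \<Rightarrow> (qpath \<Rightarrow> 'k) set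
    \<Rightarrow> ((qpath \<Rightarrow> 'k) \<times> (qpath \<Rightarrow> 'k) \<Rightarrow> 'k) \<Rightarrow> bool" where
  "lead_reducible ori n I J x \<longleftrightarrow> (\<exists>S Y. finite S \<and> S \<subseteq> minimal_lead_paths I
     \<and> (\<forall>g\<in>S. Y g \<in> J \<and> starts_at (path_end ori n g) (Y g))
     \<and> (\<lambda>q. x q - lead_tensor ori n I S Y q) \<in> tens_rel ori n I J)"

lemma finite_support_lead_tensor: "finite S \<Longrightarrow> finite {q. lead_tensor ori n I S Y q \<noteq> 0}"
proof (induction S rule: finite_induct)
  case empty
  then show ?case by (simp add: lead_tensor_def)
next
  case (insert g F)
  then show ?case by (simp add: lead_tensor_def finite_support_add support_delta)
qed

lemma tens_mult_lead_tensor: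
  "finite S \<Longrightarrow> tens_mult ori n (lead_tensor ori n I S Y)
     = (\<lambda>p. \<Sum>g\<in>S. pmult ori n (lead_elem ori n I g) (Y g) p)"
proof (induction S rule: finite_induct)
  case empty
  then show ?case by (simp add: lead_tensor_def tens_mult_def)
next
  case (insert g F)
  have "lead_tensor ori n I (insert g F) Y = (\<lambda>q. delta (lead_elem ori n I g, Y g) q + lead_tensor ori n I F Y q)"
    using insert.hyps by (simp add: lead_tensor_def)
  then show ?case
    using insert.IH insert.hyps
    by (simp add: tens_mult_add[OF finite_support_delta finite_support_lead_tensor] tens_mult_delta)
qed

lemma lead_tensor_extend:
  assumes I: "is_ideal ori n I" and J: "is_ideal ori n J"
    and T: "finite T" "S \<subseteq> T" "T \<subseteq> minimal_lead_paths I"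
  shows "(\<lambda>q. lead_tensor ori n I S Y q - lead_tensor ori n I T (\<lambda>g. if g \<in> S then Y g else (\<lambda>_. 0)) q)
    \<in> tens_rel ori n I J"
proof -
  have "lead_tensor ori n I T (\<lambda>g. if g \<in> S then Y g else (\<lambda>_. 0)) q
      = lead_tensor ori n I S Y q + (\<Sum>g\<in>T - S. delta (lead_elem ori n I g, \<lambda>_. 0) q)" for q
  proof -
    have "(\<Sum>g\<in>T - S. delta (lead_elem ori n I g, if g \<in> S then Y g else (\<lambda>_. 0)) q)
        = (\<Sum>g\<in>T - S. delta (lead_elem ori n I g, \<lambda>_. 0) q)"
      by (rule sum.cong) auto
    moreover have "(\<Sum>g\<in>S. delta (lead_elem ori n I g, if g \<in> S then Y g else (\<lambda>_. 0)) q)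
        = lead_tensor ori n I S Y q"
      unfolding lead_tensor_def by (rule sum.cong) auto
    ultimately show ?thesis
      unfolding lead_tensor_def sum.subset_diff[OF T(2,1)] by (simp add: add.commute)
  qed
  moreover have "(\<lambda>q. \<Sum>g\<in>T - S. delta (lead_elem ori n I g, \<lambda>_. 0) q) \<in> tens_rel ori n I J"
    using T by (intro tens_rel_sum ballI tens_rel_delta_zero_right[OF J] lead_elem_in_ideal[OF I]) auto
  ultimately show ?thesis
    using tens_rel.smult[where c = "-1"] by simp
qed

lemma lead_tensor_add:
  assumes I: "is_ideal ori n I" and T: "finite T" "T \<subseteq> minimal_lead_paths I"
    and Y: "\<forall>g\<in>T. Y g \<in> J \<and> Y' g \<in> J"
  shows "(\<lambda>q. lead_tensor ori n I T Y q + lead_tensor ori n I T Y' q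
      - lead_tensor ori n I T (\<lambda>g p. Y g p + Y' g p) q) \<in> tens_rel ori n I J"
proof -
  have "(\<lambda>q. \<Sum>g\<in>T. - 1 * (delta (lead_elem ori n I g, \<lambda>p. Y g p + Y' g p) q
      - delta (lead_elem ori n I g, Y g) q - delta (lead_elem ori n I g, Y' g) q)) \<in> tens_rel ori n I J"
    using T Y by (intro tens_rel_sum ballI tens_rel.smult tens_rel.add_right lead_elem_in_ideal[OF I]) auto
  then show ?thesis
    by (simp add: lead_tensor_def sum.distrib sum_subtractf algebra_simps)
qed

lemma lead_tensor_smult:
  assumes I: "is_ideal ori n I" and T: "finite T" "T \<subseteq> minimal_lead_paths I"
    and Y: "\<forall>g\<in>T. Y g \<in> J"
  shows "(\<lambda>q. c * lead_tensor ori n I T Y q - lead_tensor ori n I T (\<lambda>g p. c * Y g p) q)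
    \<in> tens_rel ori n I J"
proof -
  have "(\<lambda>q. \<Sum>g\<in>T. - 1 * (delta (lead_elem ori n I g, \<lambda>p. c * Y g p) q
      - c * delta (lead_elem ori n I g, Y g) q)) \<in> tens_rel ori n I J"
    using T Y by (intro tens_rel_sum ballI tens_rel.smult tens_rel.smult_right lead_elem_in_ideal[OF I]) auto
  then show ?thesis
    by (simp add: lead_tensor_def sum_subtractf sum_distrib_left)
qed

lemma lead_reducible_tens_rel: "x \<in> tens_rel ori n I J \<Longrightarrow> lead_reducible ori n I J x"
  unfolding lead_reducible_def
  by (rule exI[of _ "{}"], rule exI[of _ "\<lambda>_ _. 0"]) (simp add: lead_tensor_def)

lemma lead_reducible_equiv:
  assumes "lead_reducible ori n I J x" "(\<lambda>q. y q - x q) \<in> tens_rel ori n I J"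
  shows "lead_reducible ori n I J y"
proof -
  obtain S Y where SY: "finite S" "S \<subseteq> minimal_lead_paths I"
    "\<forall>g\<in>S. Y g \<in> J \<and> starts_at (path_end ori n g) (Y g)"
    "(\<lambda>q. x q - lead_tensor ori n I S Y q) \<in> tens_rel ori n I J"
    using assms(1) unfolding lead_reducible_def by blast
  have "(\<lambda>q. y q - lead_tensor ori n I S Y q) \<in> tens_rel ori n I J"
    using tens_rel.add[OF assms(2) SY(4)] by simp
  then show ?thesis unfolding lead_reducible_def using SY(1-3) by blast
qed

lemma lead_reducible_single:
  assumes "g \<in> minimal_lead_paths I" "y \<in> J" "starts_at (path_end ori n g) y"
  shows "lead_reducible ori n I J (delta (lead_elem ori n I g, y))"
  unfolding lead_reducible_def
  by (rule exI[of _ "{g}"], rule exI[of _ "\<lambda>_. y"]) (use assms tens_rel.zero in \<open>simp add: lead_tensor_def\<close>)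

lemma lead_reducible_smult:
  assumes I: "is_ideal ori n I" and J: "is_ideal ori n J" and x: "lead_reducible ori n I J x"
  shows "lead_reducible ori n I J (\<lambda>q. c * x q)"
proof -
  obtain S Y where SY: "finite S" "S \<subseteq> minimal_lead_paths I"
    "\<forall>g\<in>S. Y g \<in> J \<and> starts_at (path_end ori n g) (Y g)"
    "(\<lambda>q. x q - lead_tensor ori n I S Y q) \<in> tens_rel ori n I J"
    using x unfolding lead_reducible_def by blast
  have "(\<lambda>q. c * (x q - lead_tensor ori n I S Y q)
      + (c * lead_tensor ori n I S Y q - lead_tensor ori n I S (\<lambda>g p. c * Y g p) q)) \<in> tens_rel ori n I J"
    using SY by (intro tens_rel.add tens_rel.smult lead_tensor_smult[OF I]) auto
  then have "(\<lambda>q. c * x q - lead_tensor ori n I S (\<lambda>g p. c * Y g p) q) \<in> tens_rel ori n I J"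
    by (simp add: right_diff_distrib)
  moreover have "\<forall>g\<in>S. (\<lambda>p. c * Y g p) \<in> J \<and> starts_at (path_end ori n g) (\<lambda>p. c * Y g p)"
    using SY(3) by (simp add: ideal_smult[OF J] starts_at_smult)
  ultimately show ?thesis
    unfolding lead_reducible_def using SY(1,2) by (intro exI[of _ S] exI[of _ "\<lambda>g p. c * Y g p"]) simp
qed

lemma lead_reducible_add:
  assumes I: "is_ideal ori n I" and J: "is_ideal ori n J"
    and x: "lead_reducible ori n I J x" and y: "lead_reducible ori n I J y"
  shows "lead_reducible ori n I J (\<lambda>q. x q + y q)"
proof -
  obtain S Y where SY: "finite S" "S \<subseteq> minimal_lead_paths I"
    "\<forall>g\<in>S. Y g \<in> J \<and> starts_at (path_end ori n g) (Y g)"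
    "(\<lambda>q. x q - lead_tensor ori n I S Y q) \<in> tens_rel ori n I J"
    using x unfolding lead_reducible_def by blast
  obtain S' Y' where SY': "finite S'" "S' \<subseteq> minimal_lead_paths I"
    "\<forall>g\<in>S'. Y' g \<in> J \<and> starts_at (path_end ori n g) (Y' g)"
    "(\<lambda>q. y q - lead_tensor ori n I S' Y' q) \<in> tens_rel ori n I J"
    using y unfolding lead_reducible_def by blast
  define T where "T = S \<union> S'"
  define Z where "Z = (\<lambda>g. if g \<in> S then Y g else (\<lambda>_. 0))"
  define Z' where "Z' = (\<lambda>g. if g \<in> S' then Y' g else (\<lambda>_. 0))"
  have T: "finite T" "T \<subseteq> minimal_lead_paths I" using SY SY' by (auto simp: T_def)
  have Z: "\<forall>g\<in>T. Z g \<in> J \<and> Z' g \<in> J"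
    using SY(3) SY'(3) ideal_zero[OF J] by (auto simp: Z_def Z'_def)
  have "(\<lambda>q. (x q - lead_tensor ori n I S Y q) + (y q - lead_tensor ori n I S' Y' q)
      + (lead_tensor ori n I S Y q - lead_tensor ori n I T Z q)
      + (lead_tensor ori n I S' Y' q - lead_tensor ori n I T Z' q)
      + (lead_tensor ori n I T Z q + lead_tensor ori n I T Z' q - lead_tensor ori n I T (\<lambda>g p. Z g p + Z' g p) q))
    \<in> tens_rel ori n I J"
    unfolding Z_def Z'_def
    by (intro tens_rel.add SY(4) SY'(4) lead_tensor_extend[OF I J T(1) _ T(2)]
        lead_tensor_add[OF I T Z[unfolded Z_def Z'_def]]) (auto simp: T_def)
  then have "(\<lambda>q. (x q + y q) - lead_tensor ori n I T (\<lambda>g p. Z g p + Z' g p) q) \<in> tens_rel ori n I J"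
    by (simp add: algebra_simps)
  moreover have "\<forall>g\<in>T. (\<lambda>p. Z g p + Z' g p) \<in> J \<and> starts_at (path_end ori n g) (\<lambda>p. Z g p + Z' g p)"
  proof
    fix g assume "g \<in> T"
    have "starts_at (path_end ori n g) (Z g)" "starts_at (path_end ori n g) (Z' g)"
      using SY(3) SY'(3) starts_at_zero by (auto simp: Z_def Z'_def)
    then show "(\<lambda>p. Z g p + Z' g p) \<in> J \<and> starts_at (path_end ori n g) (\<lambda>p. Z g p + Z' g p)"
      using Z \<open>g \<in> T\<close> by (simp add: ideal_add[OF J] starts_at_add)
  qed
  ultimately show ?thesis
    unfolding lead_reducible_def using T by (intro exI[of _ T] exI[of _ "\<lambda>g p. Z g p + Z' g p"]) simp
qed

lemma tens_rel_delta_split: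
  assumes I: "is_ideal ori n I" and a': "a' \<in> I" and x: "x \<in> I" and r: "r \<in> path_alg ori n"
    and b: "b \<in> J"
  shows "(\<lambda>q. delta (\<lambda>s. a' s + c * pmult ori n x r s, b) q
      - (delta (a', b) q + c * delta (x, pmult ori n r b) q)) \<in> tens_rel ori n I J"
proof -
  have xr: "(\<lambda>s. c * pmult ori n x r s) \<in> I" "pmult ori n x r \<in> I"
    using ideal_smult[OF I] ideal_mult_right[OF I r x] by blast+
  have "(\<lambda>q. (delta (\<lambda>s. a' s + c * pmult ori n x r s, b) q - delta (a', b) q
        - delta (\<lambda>s. c * pmult ori n x r s, b) q)
      + (delta (\<lambda>s. c * pmult ori n x r s, b) q - c * delta (pmult ori n x r, b) q)
      + c * (delta (pmult ori n x r, b) q - delta (x, pmult ori n r b) q)) \<in> tens_rel ori n I J"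
    by (intro tens_rel.add tens_rel.smult tens_rel.add_left tens_rel.smult_left tens_rel.balanced
        a' x r b xr)
  then show ?thesis by (simp add: algebra_simps)
qed

lemma lead_path_reduction:
  assumes I: "is_ideal ori n I" and a: "a \<in> I" "a p0 \<noteq> 0"
  obtains g q where "g \<in> minimal_lead_paths I" "valid_path ori n q" "fst q = path_end ori n g"
    and "\<forall>r. a r - a (lead_path a) * pmult ori n (lead_elem ori n I g) (basis_path q) r \<noteq> 0
      \<longrightarrow> path_key r < path_key (lead_path a)"
proof -
  define p where "p = lead_path a"
  have a_alg: "a \<in> path_alg ori n" using ideal_subset_path_alg[OF I a(1)] .
  note max = lead_path_max[OF path_alg_finite_support[OF a_alg] a(2), folded p_def]
  have "p \<in> lead_paths I" unfolding lead_paths_def p_def using a by blast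
  then obtain m where m: "m \<le> length (snd p)" "(fst p, take m (snd p)) \<in> minimal_lead_paths I"
    by (rule lead_path_minimal_prefix)
  define g where "g = (fst p, take m (snd p))"
  define q where "q = (path_end ori n g, drop m (snd p))"
  have g: "g \<in> minimal_lead_paths I" "g \<in> lead_paths I"
    using m(2) by (auto simp: g_def minimal_lead_paths_def)
  have q: "valid_path ori n q"
    using valid_path_drop[of ori n "fst p" "snd p" m] path_alg_valid[OF a_alg conjunct1[OF max]]
    by (simp add: q_def g_def)
  have gq: "(fst g, snd g @ snd q) = p" by (simp add: g_def q_def)
  define u where "u = pmult ori n (lead_elem ori n I g) (basis_path q)"
  have "starts_at (path_end ori n g) (basis_path q :: qpath \<Rightarrow> 'a)"
    by (simp add: starts_at_def basis_path_def q_def)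
  from lead_elem_mult_lead_path[OF I g(2) basis_path_in_path_alg[OF q] this, of q]
  have u: "\<forall>r. u r \<noteq> 0 \<longrightarrow> path_key r \<le> path_key p" "u p = 1"
    unfolding u_def gq by (simp_all add: basis_path_def)
  have "path_key r < path_key p" if "a r - a p * u r \<noteq> 0" for r
  proof -
    have "a r \<noteq> 0 \<or> u r \<noteq> 0" using that by auto
    then have "path_key r \<le> path_key p" using max u(1) by blast
    moreover have "r \<noteq> p" using that u(2) by auto
    then have "path_key r \<noteq> path_key p" using path_key_inj by blast
    ultimately show ?thesis by simp
  qed
  then show ?thesis using that[OF g(1) q] by (simp add: u_def p_def q_def)
qed

definition paths_below :: "(nat \<Rightarrow> bool) \<Rightarrow> nat \<Rightarrow> (qpath \<Rightarrow> 'k::field) \<Rightarrow> qpath set" where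
  "paths_below ori n a = {r. valid_path ori n r \<and> (\<exists>s. a s \<noteq> 0 \<and> path_key r \<le> path_key s)}"

lemma finite_paths_below: "finite {p. a p \<noteq> 0} \<Longrightarrow> finite (paths_below ori n a)"
  by (rule finite_subset[of _ "\<Union>s\<in>{p. a p \<noteq> 0}. {r. valid_path ori n r \<and> path_key r \<le> path_key s}"])
    (auto simp: paths_below_def finite_paths_key_le)

lemma card_paths_below_less:
  assumes a_alg: "a \<in> path_alg ori n" and p0: "a p0 \<noteq> 0"
    and a'_lt: "\<And>s. a' s \<noteq> 0 \<Longrightarrow> path_key s < path_key (lead_path a)"
  shows "card (paths_below ori n a') < card (paths_below ori n a)"
proof (rule psubset_card_mono[OF finite_paths_below[OF path_alg_finite_support[OF a_alg]]])
  note max = lead_path_max[OF path_alg_finite_support[OF a_alg] p0]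
  show "paths_below ori n a' \<subset> paths_below ori n a"
  proof
    show "paths_below ori n a' \<subseteq> paths_below ori n a"
    proof
      fix r assume "r \<in> paths_below ori n a'"
      then obtain s where "valid_path ori n r" "a' s \<noteq> 0" "path_key r \<le> path_key s"
        by (auto simp: paths_below_def)
      then show "r \<in> paths_below ori n a"
        using a'_lt max unfolding paths_below_def by (blast intro: order.trans less_imp_le)
    qed
    have "lead_path a \<in> paths_below ori n a"
      using max path_alg_valid[OF a_alg] unfolding paths_below_def by blast
    moreover have "lead_path a \<notin> paths_below ori n a'"
      using a'_lt unfolding paths_below_def by (auto simp: not_le[symmetric])
    ultimately show "paths_below ori n a' \<noteq> paths_below ori n a" by blast
  qed
qed

text \<open>Every pure tensor \<open>a \<otimes> b\<close> is rewritten by cancelling the leading path of \<open>a\<close> against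
  \<open>lead_elem ori n I g \<otimes> e\<^sub>q b\<close>, where \<open>g\<close> is its minimal prefix in \<open>lead_paths I\<close>;
  this strictly shrinks \<open>paths_below ori n a\<close>.\<close>

lemma lead_reducible_delta:
  assumes I: "is_ideal ori n I" and J: "is_ideal ori n J" and a: "a \<in> I" and b: "b \<in> J"
  shows "lead_reducible ori n I J (delta (a, b))"
  using a
proof (induction "card (paths_below ori n a)" arbitrary: a rule: less_induct)
  case less
  show ?case
  proof (cases "\<exists>p0. a p0 \<noteq> 0")
    case False
    then have "a = (\<lambda>_. 0)" by auto
    then show ?thesis using lead_reducible_tens_rel tens_rel_delta_zero_left[OF I b] by simp
  next
    case True
    then obtain p0 where p0: "a p0 \<noteq> 0" by blast
    obtain g q where g: "g \<in> minimal_lead_paths I" and q: "valid_path ori n q"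
      and q_start: "fst q = path_end ori n g"
      and smaller: "\<forall>r. a r - a (lead_path a) * pmult ori n (lead_elem ori n I g) (basis_path q) r \<noteq> 0
        \<longrightarrow> path_key r < path_key (lead_path a)"
      using lead_path_reduction[OF I less.prems p0] by blast
    define c where "c = a (lead_path a)"
    define a' where "a' = (\<lambda>r. a r - c * pmult ori n (lead_elem ori n I g) (basis_path q) r)"
    have x: "lead_elem ori n I g \<in> I" using lead_elem_in_ideal[OF I g] .
    have e_q: "basis_path q \<in> path_alg ori n" using basis_path_in_path_alg[OF q] .
    have a': "a' \<in> I"
      unfolding a'_def using ideal_add[OF I less.prems ideal_smult[OF I ideal_mult_right[OF I e_q x], of "- c"]]
      by simp
    have "path_key s < path_key (lead_path a)" if "a' s \<noteq> 0" for s
      using smaller[rule_format, of s] that by (simp add: a'_def c_def)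
    then have "card (paths_below ori n a') < card (paths_below ori n a)"
      by (rule card_paths_below_less[OF ideal_subset_path_alg[OF I less.prems] p0])
    then have "lead_reducible ori n I J (delta (a', b))" using less.hyps a' by simp
    moreover have "lead_reducible ori n I J
        (delta (lead_elem ori n I g, pmult ori n (basis_path q) b))"
      by (intro lead_reducible_single g ideal_mult_left[OF J e_q b])
        (use starts_at_basis_path_mult[of q] q_start in simp)
    ultimately have "lead_reducible ori n I J
        (\<lambda>r. delta (a', b) r + c * delta (lead_elem ori n I g, pmult ori n (basis_path q) b) r)"
      by (intro lead_reducible_add[OF I J] lead_reducible_smult[OF I J])
    moreover have "(\<lambda>s. a' s + c * pmult ori n (lead_elem ori n I g) (basis_path q) s) = a"
      by (simp add: a'_def)
    ultimately show ?thesis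
      using lead_reducible_equiv tens_rel_delta_split[OF I a' x e_q b, of c] by simp
  qed
qed

lemma lead_reducible_free_mod:
  assumes I: "is_ideal ori n I" and J: "is_ideal ori n J" and x: "x \<in> free_mod I J"
  shows "lead_reducible ori n I J x"
proof -
  have fin: "finite {q. x q \<noteq> 0}" and supp: "{q. x q \<noteq> 0} \<subseteq> I \<times> J"
    using x by (auto simp: free_mod_def)
  have combination: "lead_reducible ori n I J (\<lambda>q'. \<Sum>r\<in>F. x r * delta r q')"
    if "finite F" "F \<subseteq> I \<times> J" for F
    using that
  proof (induction F rule: finite_induct)
    case empty
    show ?case using lead_reducible_tens_rel[OF tens_rel.zero] by simp
  next
    case (insert r F)
    have "fst r \<in> I" "snd r \<in> J" using insert.prems by auto
    then have "lead_reducible ori n I J (delta r)"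
      using lead_reducible_delta[OF I J] by (metis prod.collapse)
    then have "lead_reducible ori n I J (\<lambda>q'. x r * delta r q')"
      by (rule lead_reducible_smult[OF I J])
    moreover have "lead_reducible ori n I J (\<lambda>q'. \<Sum>r\<in>F. x r * delta r q')"
      using insert.IH insert.prems by simp
    ultimately show ?case using lead_reducible_add[OF I J] insert.hyps by simp
  qed
  have "(\<lambda>q'. \<Sum>r\<in>{q. x q \<noteq> 0}. x r * delta r q') = x"
  proof
    fix q'
    have "(\<Sum>r\<in>{q. x q \<noteq> 0}. x r * delta r q') = (\<Sum>r\<in>{q. x q \<noteq> 0}. if r = q' then x r else 0)"
      by (rule sum.cong) (auto simp: delta_def)
    then show "(\<Sum>r\<in>{q. x q \<noteq> 0}. x r * delta r q') = x q'" using fin by (simp add: sum.delta)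
  qed
  with combination[OF fin supp] show ?thesis by simp
qed

lemma tens_mult_eq_zero_imp_tens_rel:
  assumes I: "is_ideal ori n I" and J: "is_ideal ori n J" and x: "x \<in> free_mod I J"
    and zero: "tens_mult ori n x = (\<lambda>_. 0)"
  shows "x \<in> tens_rel ori n I J"
proof -
  obtain S Y where S: "finite S" "S \<subseteq> minimal_lead_paths I"
    and Y: "\<forall>g\<in>S. Y g \<in> J \<and> starts_at (path_end ori n g) (Y g)"
    and rel: "(\<lambda>q. x q - lead_tensor ori n I S Y q) \<in> tens_rel ori n I J"
    using lead_reducible_free_mod[OF I J x] unfolding lead_reducible_def by blast
  have "tens_mult ori n (\<lambda>q. x q - lead_tensor ori n I S Y q) = (\<lambda>_. 0)"
    using tens_rel_finite_support_tens_mult_zero[OF rel] by blast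
  moreover have "finite {q. x q \<noteq> 0}" using x by (simp add: free_mod_def)
  ultimately have "tens_mult ori n (lead_tensor ori n I S Y) = (\<lambda>_. 0)"
    using zero by (simp add: tens_mult_diff[OF _ finite_support_lead_tensor[OF S(1)]] fun_eq_iff)
  then have "(\<lambda>p. \<Sum>g\<in>S. pmult ori n (lead_elem ori n I g) (Y g) p) = (\<lambda>_. 0)"
    by (simp only: tens_mult_lead_tensor[OF S(1)])
  moreover have "\<forall>g\<in>S. Y g \<in> path_alg ori n \<and> starts_at (path_end ori n g) (Y g)"
    using Y by (simp add: ideal_subset_path_alg[OF J])
  ultimately have "\<forall>g\<in>S. Y g = (\<lambda>_. 0)"
    using lead_elem_combination_eq_zero[OF I S] by blast
  then have "lead_tensor ori n I S Y = (\<lambda>q. \<Sum>g\<in>S. delta (lead_elem ori n I g, \<lambda>_. 0) q)"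
    unfolding lead_tensor_def by simp
  moreover have "(\<lambda>q. \<Sum>g\<in>S. delta (lead_elem ori n I g, \<lambda>_. 0) q) \<in> tens_rel ori n I J"
    using S by (intro tens_rel_sum ballI tens_rel_delta_zero_right[OF J] lead_elem_in_ideal[OF I]) auto
  ultimately have "lead_tensor ori n I S Y \<in> tens_rel ori n I J" by simp
  with rel have "(\<lambda>q. (x q - lead_tensor ori n I S Y q) + lead_tensor ori n I S Y q) \<in> tens_rel ori n I J"
    by (rule tens_rel.add)
  then show ?thesis by simp
qed

theorem lemma10:
  fixes ori :: "nat \<Rightarrow> bool" and n :: nat
    and I J :: "(qpath \<Rightarrow> 'k::field) set"
  assumes "alg_closed TYPE('k)"
    and "admissible ori n"
    and "is_ideal ori n I" and "is_ideal ori n J"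
  shows "tens_mult ori n ` free_mod I J = ideal_prod ori n I J
         \<and> (\<forall>x\<in>free_mod I J. tens_mult ori n x = (\<lambda>_. 0) \<longleftrightarrow> x \<in> tens_rel ori n I J)"
proof (intro conjI ballI iffI)
  show "tens_mult ori n ` free_mod I J = ideal_prod ori n I J"
    by (rule tens_mult_image_free_mod[OF assms(3)])
next
  fix x assume "x \<in> free_mod I J" "tens_mult ori n x = (\<lambda>_. 0)"
  then show "x \<in> tens_rel ori n I J" by (rule tens_mult_eq_zero_imp_tens_rel[OF assms(3,4)])
next
  fix x assume "x \<in> tens_rel ori n I J"
  then show "tens_mult ori n x = (\<lambda>_. 0)" using tens_rel_finite_support_tens_mult_zero by blast
qed
end
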